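(* Let $(X,T)$ be a topological dynamical system and let $\mathcal{F}=\{f_n\}_{n\ge1}$ and $\Phi=\{\varphi_n\}_{n\ge1}$ be two asymptotically additive potentials on $X$. Let $\mu^*\in\mathcal{E}_T$ be any ergodic measure with $\mathcal{F}_*(\mu^* )=\beta(\mathcal{F})$ (such a measure exists) and set $\alpha^*=\Phi_*(\mu^* )$. Then $\Lambda_{\mathcal{F}\mid\Phi}$ is monotone nondecreasing on $[\eta(\Phi),\alpha^*]$ and monotone nonincreasing on $[\alpha^*,\beta(\Phi)]$.
   Context: $X$ is a compact metric space and $T:X\to X$ is continuous. $\mathcal{M}_T$ denotes the set of $T$-invariant Borel probability measures on $X$ (with the weak$^*$ topology) and $\mathcal{E}_T$ the set of ergodic ones. For $f\in C(X)$, $S_nf=\sum_{i=0}^{n-1}f\circ T^i$. A sequence $\mathcal{F}=\{f_n\}_{n\ge1}\subset C(X)$ is an asymptotically additive potential (AAP) if for every $\xi>0$ there is $f_\xi\in C(X)$ with $\limsup_{n\to\infty}\frac1n\|f_n-S_nf_\xi\|_\infty<\xi$. For $\mu\in\mathcal{M}_T$ the limit $\mathcal{F}_*(\mu)=\lim_{n\to\infty}\frac1n\int f_n\,d\mu$ exists and is finite, and $\mu\mapsto\mathcal{F}_*(\mu)$ is continuous and affine on $\mathcal{M}_T$. Define $\beta(\mathcal{F})=\max\{\mathcal{F}_*(\mu):\mu\in\mathcal{M}_T\}$, $\eta(\Phi)=\min\{\Phi_*(\mu):\mu\in\mathcal{M}_T\}$, $\mathcal{M}_T(\Phi,\alpha)=\{\mu\in\mathcal{M}_T:\Phi_*(\mu)=\alpha\}$,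 and $\Lambda_{\mathcal{F}\mid\Phi}(\alpha)=\sup\{\mathcal{F}_*(\mu):\mu\in\mathcal{M}_T(\Phi,\alpha)\}$. *)

theory Defs
  imports "HOL-Analysis.Analysis" "HOL-Probability.Probability" "HOL-Library.Liminf_Limsup"
begin

text \<open>The phase space X is the (whole) type 'a, a metric space assumed compact.
  Borel probability measures on X are measures M with sets M = sets borel.\<close>

definition invariant_measures :: "('a::metric_space \<Rightarrow> 'a) \<Rightarrow> 'a measure set" where
  "invariant_measures T = {M. sets M = sets borel \<and> prob_space M \<and>
      (\<forall>A \<in> sets borel. emeasure M (T -` A) = emeasure M A)}"

definition ergodic_measures :: "('a::metric_space \<Rightarrow> 'a) \<Rightarrow> 'a measure set" where
  "ergodic_measures T = {M \<in> invariant_measures T.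
      \<forall>A \<in> sets borel. T -` A = A \<longrightarrow> measure M A = 0 \<or> measure M A = 1}"

definition birkhoff_sum :: "('a \<Rightarrow> 'a) \<Rightarrow> nat \<Rightarrow> ('a \<Rightarrow> real) \<Rightarrow> 'a \<Rightarrow> real" where
  "birkhoff_sum T n f x = (\<Sum>i<n. f ((T ^^ i) x))"

definition sup_norm :: "('a \<Rightarrow> real) \<Rightarrow> real" where
  "sup_norm g = (SUP x. \<bar>g x\<bar>)"

text \<open>Asymptotically additive potential; the sequence is indexed by n \<ge> 1 (the value at 0 is irrelevant).\<close>
definition AAP :: "('a::metric_space \<Rightarrow> 'a) \<Rightarrow> (nat \<Rightarrow> 'a \<Rightarrow> real) \<Rightarrow> bool" where
  "AAP T F \<longleftrightarrow> (\<forall>n\<ge>1. continuous_on UNIV (F n)) \<and>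
     (\<forall>\<xi>>0. \<exists>g. continuous_on UNIV g \<and>
        limsup (\<lambda>n. ereal (sup_norm (\<lambda>x. F n x - birkhoff_sum T n g x) / real n)) < ereal \<xi>)"

definition Fstar :: "(nat \<Rightarrow> 'a \<Rightarrow> real) \<Rightarrow> 'a measure \<Rightarrow> real" where
  "Fstar F M = lim (\<lambda>n. (\<integral>x. F n x \<partial>M) / real n)"

definition beta :: "('a::metric_space \<Rightarrow> 'a) \<Rightarrow> (nat \<Rightarrow> 'a \<Rightarrow> real) \<Rightarrow> real" where
  "beta T F = (SUP M \<in> invariant_measures T. Fstar F M)"

definition eta :: "('a::metric_space \<Rightarrow> 'a) \<Rightarrow> (nat \<Rightarrow> 'a \<Rightarrow> real) \<Rightarrow> real" where
  "eta T F = (INF M \<in> invariant_measures T. Fstar F M)"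

definition level_measures :: "('a::metric_space \<Rightarrow> 'a) \<Rightarrow> (nat \<Rightarrow> 'a \<Rightarrow> real) \<Rightarrow> real \<Rightarrow> 'a measure set" where
  "level_measures T \<Phi> \<alpha> = {M \<in> invariant_measures T. Fstar \<Phi> M = \<alpha>}"

definition Lambda :: "('a::metric_space \<Rightarrow> 'a) \<Rightarrow> (nat \<Rightarrow> 'a \<Rightarrow> real) \<Rightarrow> (nat \<Rightarrow> 'a \<Rightarrow> real) \<Rightarrow> real \<Rightarrow> real" where
  "Lambda T F \<Phi> \<alpha> = (SUP M \<in> level_measures T \<Phi> \<alpha>. Fstar F M)"

end

(* The functional N |-> F_*(N) is affine on the convex set M_T of invariant
   measures and continuous for weak convergence, and M_T is sequentially compact.  Hence
   eta(Phi) and beta(Phi) are attained, and for a measure mu maximising F_* with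
   alpha* = Phi_*(mu), every level alpha between Phi_*(N) and alpha* is reached by a convex
   combination  t N + (1-t) mu, whose F_*-value is at least F_*(N).  So moving a level
   towards alpha* can only increase Lambda, which is the claim. *)

theory Submission
  imports Defs
begin

subsection \<open>Continuous functions and invariant measures\<close>

lemma bounded_continuous_compact:
  fixes g :: "'a::metric_space \<Rightarrow> real"
  assumes "compact (UNIV::'a set)" "continuous_on UNIV g"
  obtains B where "\<And>x. \<bar>g x\<bar> \<le> B"
proof -
  have "bounded (range g)" using assms compact_continuous_image compact_imp_bounded by blast
  then show ?thesis using that by (auto simp: bounded_iff)
qed

lemma integrable_continuous_compact:
  fixes g :: "'a::metric_space \<Rightarrow> real"
  assumes "compact (UNIV::'a set)" "continuous_on UNIV g" "prob_space N" "sets N = sets borel"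
  shows "integrable N g"
proof -
  interpret prob_space N by fact
  obtain B where B: "\<And>x. \<bar>g x\<bar> \<le> B" using bounded_continuous_compact[OF assms(1,2)] by blast
  have "g \<in> borel_measurable N"
    using borel_measurable_continuous_onI[OF assms(2)] assms(4) by (simp cong: measurable_cong_sets)
  then show ?thesis using B by (intro integrable_const_bound[where B=B]) auto
qed

lemma sup_norm_ge:
  fixes h :: "'a::metric_space \<Rightarrow> real"
  assumes "compact (UNIV::'a set)" "continuous_on UNIV h"
  shows "\<bar>h x\<bar> \<le> sup_norm h"
proof -
  obtain B where "\<And>x. \<bar>h x\<bar> \<le> B" using bounded_continuous_compact[OF assms] by blast
  then have "bdd_above (range (\<lambda>x. \<bar>h x\<bar>))" by (intro bdd_aboveI[where M=B]) auto
  then show ?thesis unfolding sup_norm_def by (rule cSUP_upper[OF UNIV_I])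
qed

lemma (in prob_space) abs_integral_le_bound:
  fixes h :: "'a \<Rightarrow> real"
  assumes "integrable M h" "\<And>x. \<bar>h x\<bar> \<le> B"
  shows "\<bar>\<integral>x. h x \<partial>M\<bar> \<le> B"
proof -
  have "\<bar>\<integral>x. h x \<partial>M\<bar> \<le> (\<integral>x. \<bar>h x\<bar> \<partial>M)" by (rule integral_abs_bound)
  also have "\<dots> \<le> (\<integral>x. B \<partial>M)" using assms by (intro integral_mono) auto
  also have "\<dots> = B" using prob_space by simp
  finally show ?thesis .
qed

lemma invariant_measuresD:
  assumes "N \<in> invariant_measures T"
  shows "sets N = sets borel" "prob_space N"
  using assms by (auto simp: invariant_measures_def)

lemma invariant_measures_iff_distr:
  fixes T :: "'a::metric_space \<Rightarrow> 'a"
  assumes "continuous_on UNIV T" "sets N = sets borel" "prob_space N"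
  shows "N \<in> invariant_measures T \<longleftrightarrow> distr N borel T = N"
proof -
  have sp: "space N = UNIV" using sets_eq_imp_space_eq[OF assms(2)] by simp
  have Tm: "T \<in> measurable N borel"
    using borel_measurable_continuous_onI[OF assms(1)] assms(2) by (simp cong: measurable_cong_sets)
  have "distr N borel T = N \<longleftrightarrow> (\<forall>A \<in> sets borel. emeasure (distr N borel T) A = emeasure N A)"
    using assms(2) by (auto intro: measure_eqI)
  also have "\<dots> \<longleftrightarrow> (\<forall>A \<in> sets borel. emeasure N (T -` A) = emeasure N A)"
    using sp by (simp add: emeasure_distr[OF Tm])
  finally show ?thesis using assms(2,3) by (auto simp: invariant_measures_def)
qed

lemma continuous_on_funpow:
  fixes T :: "'a::topological_space \<Rightarrow> 'a"
  assumes "continuous_on UNIV T"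
  shows "continuous_on UNIV (T ^^ i)"
  by (induction i) (auto intro: continuous_on_compose[OF _ assms[THEN continuous_on_subset],
        simplified comp_def] simp: continuous_on_id)

lemma continuous_on_birkhoff_sum:
  fixes T :: "'a::metric_space \<Rightarrow> 'a"
  assumes "continuous_on UNIV T" "continuous_on UNIV g"
  shows "continuous_on UNIV (birkhoff_sum T n g)"
proof -
  have "continuous_on UNIV (\<lambda>x. g ((T ^^ i) x))" for i
    using continuous_on_funpow[OF assms(1), of i] assms(2) by (metis continuous_on_compose2 subset_UNIV)
  then show ?thesis unfolding birkhoff_sum_def[abs_def] by (intro continuous_intros) auto
qed

lemma integral_funpow_invariant:
  fixes T :: "'a::metric_space \<Rightarrow> 'a" and g :: "'a \<Rightarrow> real"
  assumes N: "N \<in> invariant_measures T" and cT: "continuous_on UNIV T" and cg: "continuous_on UNIV g"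
  shows "(\<integral>x. g ((T ^^ i) x) \<partial>N) = (\<integral>x. g x \<partial>N)"
proof (induction i)
  case (Suc i)
  have Tm: "T \<in> measurable N borel" using borel_measurable_continuous_onI[OF cT] invariant_measuresD[OF N]
    by (simp cong: measurable_cong_sets)
  have "(\<lambda>x. g ((T ^^ i) x)) \<in> borel_measurable borel"
    using continuous_on_funpow[OF cT, of i] cg
    by (intro borel_measurable_continuous_onI) (metis continuous_on_compose2 subset_UNIV)
  then have "(\<integral>x. g ((T ^^ i) (T x)) \<partial>N) = (\<integral>x. g ((T ^^ i) x) \<partial>distr N borel T)"
    by (rule integral_distr[symmetric, OF Tm])
  also have "distr N borel T = N"
    using invariant_measures_iff_distr[OF cT invariant_measuresD[OF N]] N by simp
  finally show ?case using Suc by (simp del: funpow.simps add: funpow_Suc_right)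
qed simp

lemma integral_birkhoff_sum:
  fixes T :: "'a::metric_space \<Rightarrow> 'a"
  assumes cpt: "compact (UNIV::'a set)" and N: "N \<in> invariant_measures T"
    and cT: "continuous_on UNIV T" and cg: "continuous_on UNIV g"
  shows "(\<integral>x. birkhoff_sum T n g x \<partial>N) = real n * (\<integral>x. g x \<partial>N)"
proof -
  have "continuous_on UNIV (\<lambda>x. g ((T ^^ i) x))" for i
    using continuous_on_funpow[OF cT, of i] cg by (metis continuous_on_compose2 subset_UNIV)
  then have "integrable N (\<lambda>x. g ((T ^^ i) x))" for i
    using integrable_continuous_compact[OF cpt] invariant_measuresD[OF N] by blast
  then have "(\<integral>x. birkhoff_sum T n g x \<partial>N) = (\<Sum>i<n. (\<integral>x. g ((T ^^ i) x) \<partial>N))"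
    unfolding birkhoff_sum_def by (simp add: Bochner_Integration.integral_sum)
  then show ?thesis using integral_funpow_invariant[OF N cT cg] by simp
qed

subsection \<open>The limit functional of an asymptotically additive potential\<close>

lemma AAP_uniform_approx:
  fixes T :: "'a::metric_space \<Rightarrow> 'a"
  assumes cpt: "compact (UNIV::'a set)" and cT: "continuous_on UNIV T" and A: "AAP T F" and xi: "\<xi> > 0"
  obtains g n0 where "continuous_on UNIV g"
    "\<And>n N. n \<ge> n0 \<Longrightarrow> N \<in> invariant_measures T \<Longrightarrow> \<bar>(\<integral>x. F n x \<partial>N) / real n - (\<integral>x. g x \<partial>N)\<bar> \<le> \<xi>"
proof -
  obtain g where cg: "continuous_on UNIV g"
    and ls: "limsup (\<lambda>n. ereal (sup_norm (\<lambda>x. F n x - birkhoff_sum T n g x) / real n)) < ereal \<xi>"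
    using A xi unfolding AAP_def by blast
  obtain n0 where n0: "\<And>n. n \<ge> n0 \<Longrightarrow> sup_norm (\<lambda>x. F n x - birkhoff_sum T n g x) / real n < \<xi>"
    using Limsup_lessD[OF ls] unfolding eventually_sequentially by auto
  have "\<bar>(\<integral>x. F n x \<partial>N) / real n - (\<integral>x. g x \<partial>N)\<bar> \<le> \<xi>"
    if n: "n \<ge> max n0 1" and N: "N \<in> invariant_measures T" for n N
  proof -
    interpret prob_space N using invariant_measuresD[OF N] by blast
    have cF: "continuous_on UNIV (F n)" using A n unfolding AAP_def by simp
    have ch: "continuous_on UNIV (\<lambda>x. F n x - birkhoff_sum T n g x)"
      using cF continuous_on_birkhoff_sum[OF cT cg] by (intro continuous_intros)
    have iF: "integrable N (F n)" and iB: "integrable N (birkhoff_sum T n g)"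
      using integrable_continuous_compact[OF cpt _ prob_space_axioms invariant_measuresD(1)[OF N]]
        cF continuous_on_birkhoff_sum[OF cT cg] by auto
    have "\<bar>\<integral>x. (F n x - birkhoff_sum T n g x) \<partial>N\<bar> \<le> sup_norm (\<lambda>x. F n x - birkhoff_sum T n g x)"
      using sup_norm_ge[OF cpt ch] iF iB by (intro abs_integral_le_bound) auto
    also have "\<dots> < \<xi> * real n" using n0[of n] n by (simp add: field_simps)
    finally have "\<bar>(\<integral>x. F n x \<partial>N) - real n * (\<integral>x. g x \<partial>N)\<bar> < \<xi> * real n"
      using integral_birkhoff_sum[OF cpt N cT cg, of n] iF iB by simp
    then have "\<bar>((\<integral>x. F n x \<partial>N) - real n * (\<integral>x. g x \<partial>N)) / real n\<bar> < \<xi>"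
      using n by (simp add: field_simps)
    then show ?thesis using n by (simp add: field_simps)
  qed
  then show ?thesis using that cg by blast
qed

text \<open>The limit defining \<open>F\<^sub>*(N)\<close> exists: by the uniform approximation the normalised
  integrals form a Cauchy sequence.\<close>

lemma Fstar_LIMSEQ:
  fixes T :: "'a::metric_space \<Rightarrow> 'a"
  assumes cpt: "compact (UNIV::'a set)" and cT: "continuous_on UNIV T" and A: "AAP T F"
    and N: "N \<in> invariant_measures T"
  shows "(\<lambda>n. (\<integral>x. F n x \<partial>N) / real n) \<longlonglongrightarrow> Fstar F N"
proof -
  let ?a = "\<lambda>n. (\<integral>x. F n x \<partial>N) / real n"
  have "Cauchy ?a"
  proof (rule CauchyI)
    fix e :: real assume e: "e > 0"
    obtain g n0 where g: "\<And>n N. n \<ge> n0 \<Longrightarrow> N \<in> invariant_measures T \<Longrightarrow>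
        \<bar>(\<integral>x. F n x \<partial>N) / real n - (\<integral>x. g x \<partial>N)\<bar> \<le> e/3"
      using AAP_uniform_approx[OF cpt cT A, of "e/3"] e by (metis divide_pos_pos zero_less_numeral)
    then have "norm (?a m - ?a n) < e" if "m \<ge> n0" "n \<ge> n0" for m n
      using g[OF that(1) N] g[OF that(2) N] e
      by (simp only: real_norm_def abs_le_iff abs_less_iff) linarith
    then show "\<exists>M. \<forall>m\<ge>M. \<forall>n\<ge>M. norm (?a m - ?a n) < e" by blast
  qed
  then show ?thesis unfolding Fstar_def by (simp add: Cauchy_convergent_iff convergent_LIMSEQ_iff)
qed

lemma Fstar_uniform_approx:
  fixes T :: "'a::metric_space \<Rightarrow> 'a"
  assumes cpt: "compact (UNIV::'a set)" and cT: "continuous_on UNIV T" and A: "AAP T F" and xi: "\<xi> > 0"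
  obtains g where "continuous_on UNIV g"
    "\<And>N. N \<in> invariant_measures T \<Longrightarrow> \<bar>Fstar F N - (\<integral>x. g x \<partial>N)\<bar> \<le> \<xi>"
proof -
  obtain g n0 where cg: "continuous_on UNIV g" and g: "\<And>n N. n \<ge> n0 \<Longrightarrow> N \<in> invariant_measures T \<Longrightarrow>
        \<bar>(\<integral>x. F n x \<partial>N) / real n - (\<integral>x. g x \<partial>N)\<bar> \<le> \<xi>"
    using AAP_uniform_approx[OF cpt cT A xi] by blast
  have "\<bar>Fstar F N - (\<integral>x. g x \<partial>N)\<bar> \<le> \<xi>" if N: "N \<in> invariant_measures T" for N
  proof (rule LIMSEQ_le_const2)
    show "(\<lambda>n. \<bar>(\<integral>x. F n x \<partial>N) / real n - (\<integral>x. g x \<partial>N)\<bar>) \<longlonglongrightarrow> \<bar>Fstar F N - (\<integral>x. g x \<partial>N)\<bar>"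
      by (intro tendsto_intros Fstar_LIMSEQ[OF cpt cT A N])
  qed (use g N in auto)
  then show ?thesis using that cg by blast
qed

subsection \<open>Convex combinations of invariant measures\<close>

text \<open>The mixture \<open>t N\<^sub>1 + (1 - t) N\<^sub>2\<close>, realised as a Bernoulli-indexed bind.\<close>

definition mixture :: "real \<Rightarrow> 'a measure \<Rightarrow> 'a measure \<Rightarrow> 'a measure" where
  "mixture t N1 N2 = measure_pmf (bernoulli_pmf t) \<bind> (\<lambda>b. if b then N1 else N2)"

lemma mixture_facts:
  fixes N1 N2 :: "'a::metric_space measure"
  assumes t: "0 \<le> t" "t \<le> 1" and p: "prob_space N1" "prob_space N2"
    and s: "sets N1 = sets borel" "sets N2 = sets borel"
  shows "sets (mixture t N1 N2) = sets borel"
    and "\<And>A. A \<in> sets borel \<Longrightarrow>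
           emeasure (mixture t N1 N2) A = emeasure N1 A * ennreal t + emeasure N2 A * ennreal (1 - t)"
    and "prob_space (mixture t N1 N2)"
    and "\<And>f::'a\<Rightarrow>real. f \<in> borel_measurable borel \<Longrightarrow> (\<And>x. \<bar>f x\<bar> \<le> B) \<Longrightarrow>
           (\<integral>x. f x \<partial>mixture t N1 N2) = (\<integral>x. f x \<partial>N1) * t + (\<integral>x. f x \<partial>N2) * (1 - t)"
proof -
  let ?K = "\<lambda>b. if b then N1 else N2"
  have K: "?K \<in> measurable (measure_pmf (bernoulli_pmf t)) (subprob_algebra borel)"
    using p s by (auto simp: space_subprob_algebra prob_space_imp_subprob_space)
  show ss: "sets (mixture t N1 N2) = sets borel" unfolding mixture_def
    by (rule sets_bind) (use s in auto)
  show em: "emeasure (mixture t N1 N2) A = emeasure N1 A * ennreal t + emeasure N2 A * ennreal (1 - t)"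
    if A: "A \<in> sets borel" for A
    unfolding mixture_def using t by (simp add: emeasure_bind[OF _ K A])
  show "prob_space (mixture t N1 N2)"
  proof
    have "emeasure N1 UNIV = 1" "emeasure N2 UNIV = 1"
      using p s[THEN sets_eq_imp_space_eq] by (auto dest: prob_space.emeasure_space_1)
    then have "emeasure (mixture t N1 N2) UNIV = ennreal t + ennreal (1 - t)"
      using em[of UNIV] by simp
    also have "\<dots> = 1" using t by (simp add: ennreal_plus[symmetric] del: ennreal_plus)
    finally show "emeasure (mixture t N1 N2) (space (mixture t N1 N2)) = 1"
      using sets_eq_imp_space_eq[OF ss] by simp
  qed
  fix f :: "'a \<Rightarrow> real" assume fm: "f \<in> borel_measurable borel" and fb: "\<And>x. \<bar>f x\<bar> \<le> B"
  have "(\<integral>x. f x \<partial>mixture t N1 N2) = (\<integral>b. (\<integral>x. f x \<partial>?K b) \<partial>measure_pmf (bernoulli_pmf t))"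
    unfolding mixture_def
  proof (rule integral_bind[where B=B and B'=1])
    show "finite_measure (measure_pmf (bernoulli_pmf t))"
      using prob_space_measure_pmf unfolding prob_space_def by blast
    show "AE x in measure_pmf (bernoulli_pmf t). emeasure (?K x) (space (?K x)) \<le> ennreal 1"
      using p by (auto simp: prob_space.emeasure_space_1)
  qed (use fm fb K in auto)
  then show "(\<integral>x. f x \<partial>mixture t N1 N2) = (\<integral>x. f x \<partial>N1) * t + (\<integral>x. f x \<partial>N2) * (1 - t)"
    using t by simp
qed

lemma mixture_invariant:
  fixes T :: "'a::metric_space \<Rightarrow> 'a"
  assumes cT: "continuous_on UNIV T" and t: "0 \<le> t" "t \<le> 1"
    and N1: "N1 \<in> invariant_measures T" and N2: "N2 \<in> invariant_measures T"
  shows "mixture t N1 N2 \<in> invariant_measures T"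
proof -
  note f = mixture_facts[OF t invariant_measuresD(2)[OF N1] invariant_measuresD(2)[OF N2]
      invariant_measuresD(1)[OF N1] invariant_measuresD(1)[OF N2]]
  have "emeasure (mixture t N1 N2) (T -` A) = emeasure (mixture t N1 N2) A" if A: "A \<in> sets borel" for A
  proof -
    have "T -` A \<in> sets borel"
      using measurable_sets[OF borel_measurable_continuous_onI[OF cT] A] by simp
    then show ?thesis using N1 N2 A by (simp add: f(2) invariant_measures_def)
  qed
  then show ?thesis using f(1,3) unfolding invariant_measures_def by blast
qed

lemma Fstar_mixture:
  fixes T :: "'a::metric_space \<Rightarrow> 'a"
  assumes cpt: "compact (UNIV::'a set)" and cT: "continuous_on UNIV T" and A: "AAP T F"
    and t: "0 \<le> t" "t \<le> 1"
    and N1: "N1 \<in> invariant_measures T" and N2: "N2 \<in> invariant_measures T"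
  shows "Fstar F (mixture t N1 N2) = t * Fstar F N1 + (1 - t) * Fstar F N2"
proof -
  note f = mixture_facts[OF t invariant_measuresD(2)[OF N1] invariant_measuresD(2)[OF N2]
      invariant_measuresD(1)[OF N1] invariant_measuresD(1)[OF N2]]
  have eq: "(\<integral>x. F n x \<partial>mixture t N1 N2) / real n
      = t * ((\<integral>x. F n x \<partial>N1) / real n) + (1 - t) * ((\<integral>x. F n x \<partial>N2) / real n)" for n
  proof (cases "n = 0")
    case False
    then have cF: "continuous_on UNIV (F n)" using A unfolding AAP_def by auto
    obtain B where B: "\<And>x. \<bar>F n x\<bar> \<le> B" using bounded_continuous_compact[OF cpt cF] by blast
    show ?thesis using f(4)[OF borel_measurable_continuous_onI[OF cF] B] False by (simp add: field_simps)
  qed simp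
  have "(\<lambda>n. (\<integral>x. F n x \<partial>mixture t N1 N2) / real n) \<longlonglongrightarrow> t * Fstar F N1 + (1 - t) * Fstar F N2"
    unfolding eq by (intro tendsto_intros Fstar_LIMSEQ[OF cpt cT A N1] Fstar_LIMSEQ[OF cpt cT A N2])
  then show ?thesis
    using Fstar_LIMSEQ[OF cpt cT A mixture_invariant[OF cT t N1 N2]] LIMSEQ_unique by blast
qed

subsection \<open>A Borel encoding of a compact metric space into the reals\<close>

definition uniformly_invertible :: "('a::metric_space \<Rightarrow> real) \<Rightarrow> bool" where
  "uniformly_invertible s \<longleftrightarrow> (\<forall>\<epsilon>>0. \<exists>\<delta>>0. \<forall>x y. \<bar>s x - s y\<bar> < \<delta> \<longrightarrow> dist x y < \<epsilon>)"

text \<open>Finite \<open>2\<^sup>-\<^sup>k\<close>-nets of a compact space, listed so that points can be coded by indices.\<close>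

lemma finite_nets:
  assumes "compact (UNIV::'a::metric_space set)"
  obtains ys :: "nat \<Rightarrow> 'a::metric_space list" where "\<And>k x. \<exists>i<length (ys k). dist x (ys k ! i) < (1/2)^k"
proof -
  have "\<forall>k. \<exists>l::'a list. \<forall>x. \<exists>i<length l. dist x (l ! i) < (1/2)^k"
  proof
    fix k :: nat
    have pos: "(1/2::real)^k > 0" by simp
    have "\<forall>\<epsilon>>0. \<exists>K. finite K \<and> (UNIV::'a set) \<subseteq> (\<Union>x\<in>K. ball x \<epsilon>)"
      using assms compact_eq_totally_bounded by blast
    then obtain K :: "'a set" where K: "finite K" "UNIV \<subseteq> (\<Union>x\<in>K. ball x ((1/2)^k))"
      using pos by blast
    obtain l where l: "set l = K" using finite_list[OF K(1)] by blast
    have "\<exists>i<length l. dist x (l ! i) < (1/2)^k" for x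
    proof -
      have "x \<in> (\<Union>x\<in>K. ball x ((1/2)^k))" using K(2) by blast
      then obtain y where y: "y \<in> K" "dist y x < (1/2)^k" by auto
      then obtain i where "i < length l" "l ! i = y" using l by (auto simp: in_set_conv_nth)
      then show ?thesis using y by (auto simp: dist_commute)
    qed
    then show "\<exists>l::'a list. \<forall>x. \<exists>i<length l. dist x (l ! i) < (1/2)^k" by blast
  qed
  then obtain ys :: "nat \<Rightarrow> 'a list" where "\<forall>k x. \<exists>i<length (ys k). dist x (ys k ! i) < (1/2)^k"
    by metis
  then show ?thesis using that by blast
qed

text \<open>Weights of the digit expansion: each weight is smaller than a quarter of the previous one
  divided by the number of digits available at that level, so later digits cannot undo a
  difference in an earlier one.\<close>

fun digit_weight :: "(nat \<Rightarrow> nat) \<Rightarrow> nat \<Rightarrow> real" where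
  "digit_weight m 0 = 1"
| "digit_weight m (Suc k) = digit_weight m k / 4 / (real (m (Suc k)) + 1)"

lemma digit_weight_pos: "digit_weight m k > 0"
  by (induction k) (auto intro!: divide_pos_pos add_nonneg_pos)

lemma digit_weight_Suc: "digit_weight m (Suc k) * (real (m (Suc k)) + 1) = digit_weight m k / 4"
proof -
  have q: "real (m (Suc k)) + 1 > 0" by simp
  have "digit_weight m (Suc k) = digit_weight m k / 4 / (real (m (Suc k)) + 1)" by simp
  then show ?thesis using q by (simp add: field_simps del: digit_weight.simps)
qed

lemma digit_weight_le_pow: "digit_weight m (k + i) \<le> digit_weight m k * (1/4)^i"
proof (induction i)
  case (Suc i)
  have "digit_weight m (k + i) / 4 / (real (m (Suc (k + i))) + 1) \<le> digit_weight m (k + i) / 4 / 1"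
    using digit_weight_pos[of m "k + i"] by (intro frac_le) auto
  then have "digit_weight m (k + Suc i) \<le> digit_weight m (k + i) / 4" by simp
  then show ?case using Suc by simp
qed simp

lemma digit_weight_antimono:
  assumes "j \<le> k"
  shows "digit_weight m k \<le> digit_weight m j"
proof -
  have "digit_weight m k \<le> digit_weight m j * (1/4)^(k - j)"
    using digit_weight_le_pow[of m j "k - j"] assms by simp
  also have "\<dots> \<le> digit_weight m j"
    using digit_weight_pos[of m j] by (intro mult_left_le) (auto simp: power_le_one)
  finally show ?thesis .
qed

lemma digit_weight_times_bound: "digit_weight m k * real (m k) \<le> (real (m 0) + 1) * (1/4)^k"
proof (cases k)
  case (Suc j)
  have "digit_weight m (Suc j) * real (m (Suc j)) \<le> digit_weight m (Suc j) * (real (m (Suc j)) + 1)"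
    using digit_weight_pos[of m "Suc j"] by (intro mult_left_mono) auto
  also have "\<dots> \<le> (1/4)^j / 4" using digit_weight_Suc[of m j] digit_weight_le_pow[of m 0 j] by simp
  also have "\<dots> \<le> (real (m 0) + 1) * (1/4)^(Suc j)" by simp
  finally show ?thesis using Suc by simp
qed simp

definition digit_value :: "(nat \<Rightarrow> nat) \<Rightarrow> (nat \<Rightarrow> 'x \<Rightarrow> nat) \<Rightarrow> 'x \<Rightarrow> real" where
  "digit_value m a x = (\<Sum>k. digit_weight m k * real (a k x))"

lemma digit_term_bounds:
  assumes "\<And>k. a k x < m k"
  shows "0 \<le> digit_weight m k * real (a k x)"
    and "digit_weight m k * real (a k x) \<le> (real (m 0) + 1) * (1/4)^k"
proof -
  show "0 \<le> digit_weight m k * real (a k x)" using digit_weight_pos[of m k] by simp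
  have "digit_weight m k * real (a k x) \<le> digit_weight m k * real (m k)"
    using digit_weight_pos[of m k] assms[of k] by (intro mult_left_mono) auto
  then show "digit_weight m k * real (a k x) \<le> (real (m 0) + 1) * (1/4)^k"
    using digit_weight_times_bound[of m k] by linarith
qed

lemma digit_value_summable:
  assumes "\<And>k. a k x < m k"
  shows "summable (\<lambda>k. digit_weight m k * real (a k x))"
proof (rule summable_comparison_test')
  show "summable (\<lambda>k. (real (m 0) + 1) * (1/4::real)^k)" by (intro summable_mult summable_geometric) simp
  show "norm (digit_weight m k * real (a k x)) \<le> (real (m 0) + 1) * (1/4)^k" for k
    using digit_term_bounds[where a=a and m=m and x=x, OF assms] by simp
qed

lemma digit_value_bounded:
  assumes "\<And>k. a k x < m k"
  shows "\<bar>digit_value m a x\<bar> \<le> (real (m 0) + 1) * (4/3)"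
proof -
  note bounds = digit_term_bounds[where a=a and m=m and x=x, OF assms]
  note summ = digit_value_summable[where a=a and m=m and x=x, OF assms]
  have "0 \<le> digit_value m a x" unfolding digit_value_def
    using summ bounds by (intro suminf_nonneg) auto
  moreover have "digit_value m a x \<le> (\<Sum>k. (real (m 0) + 1) * (1/4::real)^k)" unfolding digit_value_def
    using summ bounds by (intro suminf_le summable_mult summable_geometric) auto
  moreover have "(\<Sum>k. (real (m 0) + 1) * (1/4::real)^k) = (real (m 0) + 1) * (4/3)"
    by (simp add: suminf_mult suminf_geometric)
  ultimately show ?thesis by simp
qed

text \<open>Two digit sequences that first differ at position \<open>k\<close> have values at least
  half the \<open>k\<close>-th weight apart: the tail after \<open>k\<close> is at most a third of that weight.\<close>

lemma digit_value_separates: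
  assumes a: "\<And>k x. a k x < m k"
    and eq: "\<And>j. j < k \<Longrightarrow> a j x = a j y" and ne: "a k x \<noteq> a k y"
  shows "digit_weight m k / 2 \<le> \<bar>digit_value m a x - digit_value m a y\<bar>"
proof -
  define d where "d j = digit_weight m j * real (a j x) - digit_weight m j * real (a j y)" for j
  have sd: "summable d" unfolding d_def by (intro summable_diff digit_value_summable a)
  have "digit_value m a x - digit_value m a y = suminf d"
    unfolding digit_value_def d_def by (intro suminf_diff digit_value_summable a)
  also have "\<dots> = (\<Sum>n. d (n + Suc k)) + (\<Sum>i<Suc k. d i)" by (rule suminf_split_initial_segment[OF sd])
  also have "(\<Sum>i<Suc k. d i) = d k" using eq by (simp add: d_def)
  finally have split: "digit_value m a x - digit_value m a y = (\<Sum>n. d (n + Suc k)) + d k" .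
  have d_eq: "d j = digit_weight m j * (real (a j x) - real (a j y))" for j
    by (simp add: d_def right_diff_distrib)
  have abs_d: "\<bar>d j\<bar> = digit_weight m j * \<bar>real (a j x) - real (a j y)\<bar>" for j
    unfolding d_eq abs_mult using digit_weight_pos[of m j] by simp
  have head: "digit_weight m k \<le> \<bar>d k\<bar>"
  proof -
    have "1 \<le> \<bar>real (a k x) - real (a k y)\<bar>" using ne by linarith
    then show ?thesis unfolding abs_d using digit_weight_pos[of m k]
      by (metis mult.right_neutral mult_left_mono less_imp_le)
  qed
  have tail_term: "\<bar>d (n + Suc k)\<bar> \<le> digit_weight m k / 4 * (1/4)^n" for n
  proof -
    let ?j = "Suc (k + n)"
    have "\<bar>real (a ?j x) - real (a ?j y)\<bar> \<le> real (m ?j) + 1" using a[of ?j x] a[of ?j y] by linarith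
    then have "\<bar>d ?j\<bar> \<le> digit_weight m ?j * (real (m ?j) + 1)" unfolding abs_d
      using digit_weight_pos[of m ?j] by (intro mult_left_mono) auto
    also have "\<dots> \<le> digit_weight m k * (1/4)^n / 4"
      using digit_weight_Suc[of m "k + n"] digit_weight_le_pow[of m k n] by simp
    finally show ?thesis by (simp add: ac_simps)
  qed
  have sg: "summable (\<lambda>n. digit_weight m k / 4 * (1/4::real)^n)" by (intro summable_mult summable_geometric) simp
  have sabs: "summable (\<lambda>n. norm (d (n + Suc k)))"
    by (rule summable_comparison_test'[OF sg]) (use tail_term in auto)
  have "\<bar>\<Sum>n. d (n + Suc k)\<bar> \<le> (\<Sum>n. norm (d (n + Suc k)))"
    using summable_norm[OF sabs] by simp
  also have "\<dots> \<le> (\<Sum>n. digit_weight m k / 4 * (1/4::real)^n)"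
    by (rule suminf_le) (use tail_term sabs sg in auto)
  also have "\<dots> = digit_weight m k / 4 * (\<Sum>n. (1/4::real)^n)" by (rule suminf_mult) simp
  also have "\<dots> = digit_weight m k / 3" by (simp add: suminf_geometric)
  finally show ?thesis using split head digit_weight_pos[of m k] by linarith
qed

lemma digit_value_close_digits_agree:
  assumes a: "\<And>k x. a k x < m k"
    and close: "\<bar>digit_value m a x - digit_value m a y\<bar> < digit_weight m K / 2"
  shows "a K x = a K y"
proof (rule ccontr)
  assume ne: "a K x \<noteq> a K y"
  define k0 where "k0 = (LEAST k. a k x \<noteq> a k y)"
  have k0: "a k0 x \<noteq> a k0 y" unfolding k0_def by (rule LeastI) (rule ne)
  have k0K: "k0 \<le> K" unfolding k0_def by (rule Least_le) (rule ne)
  have "\<And>j. j < k0 \<Longrightarrow> a j x = a j y" unfolding k0_def using not_less_Least by blast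
  then have "digit_weight m k0 / 2 \<le> \<bar>digit_value m a x - digit_value m a y\<bar>"
    using digit_value_separates[where a=a and m=m, OF a _ k0] by blast
  then show False using close digit_weight_antimono[OF k0K, of m] by linarith
qed

text \<open>Coding each point by the indices of its first nearby net points gives a bounded Borel
  function on a compact space whose inverse is uniformly continuous.\<close>

lemma compact_encoding:
  assumes cpt: "compact (UNIV::'a::metric_space set)"
  obtains s :: "'a::metric_space \<Rightarrow> real" and B
  where "s \<in> borel_measurable borel" "\<And>x. \<bar>s x\<bar> \<le> B" "uniformly_invertible s"
proof -
  obtain ys :: "nat \<Rightarrow> 'a list" where ys: "\<And>k x. \<exists>i<length (ys k). dist x (ys k ! i) < (1/2)^k"
    using finite_nets[OF cpt] by blast
  define m where "m k = length (ys k)" for k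
  define a where "a k x = (LEAST i. dist x (ys k ! i) < (1/2::real)^k)" for k x
  have a_lt: "a k x < m k" and a_dist: "dist x (ys k ! a k x) < (1/2)^k" for k x
  proof -
    obtain i where i: "i < m k" "dist x (ys k ! i) < (1/2)^k" using ys[of k x] unfolding m_def by blast
    show "dist x (ys k ! a k x) < (1/2)^k" unfolding a_def by (rule LeastI[of _ i]) (rule i(2))
    have "a k x \<le> i" unfolding a_def by (rule Least_le) (rule i(2))
    then show "a k x < m k" using i by simp
  qed
  have "(\<lambda>x. a k x) \<in> measurable borel (count_space UNIV)" for k
    unfolding a_def by measurable (auto intro!: borel_measurable_continuous_onI continuous_intros)
  then have "(\<lambda>x. digit_weight m k * real (a k x)) \<in> borel_measurable borel" for k
    by (rule measurable_compose) simp
  then have meas: "digit_value m a \<in> borel_measurable borel"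
    unfolding digit_value_def[abs_def] by (rule borel_measurable_suminf)
  have "\<exists>\<delta>>0. \<forall>x y. \<bar>digit_value m a x - digit_value m a y\<bar> < \<delta> \<longrightarrow> dist x y < \<epsilon>"
    if e: "\<epsilon> > 0" for \<epsilon>
  proof -
    obtain K where K: "(1/2::real)^K < \<epsilon>/2" using real_arch_pow_inv[of "\<epsilon>/2" "1/2"] e by auto
    have "dist x y < \<epsilon>" if "\<bar>digit_value m a x - digit_value m a y\<bar> < digit_weight m K / 2" for x y
    proof -
      have "a K x = a K y" by (rule digit_value_close_digits_agree[OF a_lt that])
      then have "dist x y < (1/2)^K + (1/2)^K"
        using a_dist[of x K] a_dist[of y K] dist_triangle2[of x y "ys K ! a K x"] by simp
      then show ?thesis using K by simp
    qed
    then show ?thesis using digit_weight_pos[of m K] by (intro exI[of _ "digit_weight m K / 2"]) auto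
  qed
  then show ?thesis
    using that[OF meas digit_value_bounded[where a=a and m=m, OF a_lt]] unfolding uniformly_invertible_def by blast
qed

definition limit_preimage :: "('a::metric_space \<Rightarrow> real) \<Rightarrow> real \<Rightarrow> 'a \<Rightarrow> bool" where
  "limit_preimage s t y \<longleftrightarrow> (\<forall>\<eta>>0. \<exists>x. \<bar>s x - t\<bar> < \<eta> \<and> dist x y < \<eta>)"

lemma limit_preimage_exists:
  fixes s :: "'a::metric_space \<Rightarrow> real"
  assumes cpt: "compact (UNIV::'a set)" and t: "t \<in> closure (range s)"
  obtains y where "limit_preimage s t y"
proof -
  obtain ts where ts: "\<And>n. ts n \<in> range s" "ts \<longlonglongrightarrow> t"
    using t by (auto simp: closure_sequential)
  define zs where "zs n = (SOME z. s z = ts n)" for n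
  have s_zs: "s (zs n) = ts n" for n
  proof -
    have "\<exists>z. s z = ts n" using ts(1)[of n] by auto
    then show ?thesis unfolding zs_def by (rule someI_ex)
  qed
  obtain y r where r: "strict_mono r" and y: "(zs \<circ> r) \<longlonglongrightarrow> y"
    by (rule seq_compactE[OF compact_imp_seq_compact[OF cpt], of zs]) auto
  have "\<exists>x. \<bar>s x - t\<bar> < \<eta> \<and> dist x y < \<eta>" if "\<eta> > 0" for \<eta>
  proof -
    have "eventually (\<lambda>n. dist (ts (r n)) t < \<eta>) sequentially"
      using LIMSEQ_subseq_LIMSEQ[OF ts(2) r] \<open>\<eta> > 0\<close> by (auto simp: comp_def dest: tendstoD)
    moreover have "eventually (\<lambda>n. dist (zs (r n)) y < \<eta>) sequentially"
      using y \<open>\<eta> > 0\<close> by (auto simp: comp_def dest: tendstoD)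
    ultimately have "eventually (\<lambda>n. dist (ts (r n)) t < \<eta> \<and> dist (zs (r n)) y < \<eta>) sequentially"
      by (rule eventually_conj)
    then obtain n where "dist (ts (r n)) t < \<eta>" "dist (zs (r n)) y < \<eta>"
      unfolding eventually_sequentially by blast
    then show ?thesis using s_zs[of "r n"] by (intro exI[of _ "zs (r n)"]) (simp add: dist_real_def)
  qed
  then show ?thesis using that unfolding limit_preimage_def by blast
qed

lemma limit_preimage_close:
  assumes inv: "uniformly_invertible s" and e: "\<epsilon> > 0"
  obtains \<delta> where "\<delta> > 0"
    "\<And>t t' y y'. limit_preimage s t y \<Longrightarrow> limit_preimage s t' y' \<Longrightarrow> \<bar>t - t'\<bar> < \<delta> \<Longrightarrow> dist y y' < \<epsilon>"
proof -
  have "\<epsilon>/3 > 0" using e by simp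
  then obtain \<delta> where \<delta>: "\<delta> > 0" "\<And>x x'. \<bar>s x - s x'\<bar> < \<delta> \<Longrightarrow> dist x x' < \<epsilon>/3"
    using inv unfolding uniformly_invertible_def by blast
  have "dist y y' < \<epsilon>"
    if y: "limit_preimage s t y" and y': "limit_preimage s t' y'" and tt: "\<bar>t - t'\<bar> < \<delta>/2" for t t' y y'
  proof -
    define \<eta> where "\<eta> = min (\<delta>/4) (\<epsilon>/3)"
    have "\<eta> > 0" using \<delta> e by (simp add: \<eta>_def)
    then obtain x x' where x: "\<bar>s x - t\<bar> < \<eta>" "dist x y < \<eta>" and x': "\<bar>s x' - t'\<bar> < \<eta>" "dist x' y' < \<eta>"
      using y y' unfolding limit_preimage_def by meson
    have "\<bar>s x - t\<bar> < \<delta>/4" "\<bar>s x' - t'\<bar> < \<delta>/4" using x(1) x'(1) by (auto simp: \<eta>_def)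
    then have "\<bar>s x - s x'\<bar> < \<delta>" using tt by (simp only: abs_less_iff) linarith
    then have "dist x x' < \<epsilon>/3" by (rule \<delta>(2))
    moreover have "dist y y' \<le> dist x y + dist x x' + dist x' y'"
      using dist_triangle[of y y' x] dist_triangle[of x y' x'] by (simp add: dist_commute)
    ultimately show ?thesis using x(2) x'(2) by (simp add: \<eta>_def)
  qed
  then show ?thesis using that[of "\<delta>/2"] \<delta>(1) by simp
qed

lemma uniformly_invertible_left_inverse:
  fixes s :: "'a::metric_space \<Rightarrow> real"
  assumes cpt: "compact (UNIV::'a set)" and inv: "uniformly_invertible s"
  obtains g where "continuous_on (closure (range s)) g" "\<And>x. g (s x) = x"
proof -
  define g where "g t = (SOME y. limit_preimage s t y)" for t
  have g: "limit_preimage s t (g t)" if t: "t \<in> closure (range s)" for t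
  proof -
    obtain y where "limit_preimage s t y" using limit_preimage_exists[OF cpt t] .
    then show ?thesis unfolding g_def by (rule someI)
  qed
  have "g (s x) = x" for x
  proof -
    have self: "limit_preimage s (s x) x"
      unfolding limit_preimage_def by (intro allI impI exI[of _ x]) simp
    have gx: "limit_preimage s (s x) (g (s x))" by (rule g[OF closure_subset[THEN subsetD, OF rangeI]])
    have "dist (g (s x)) x < \<epsilon>" if e: "\<epsilon> > 0" for \<epsilon>
    proof -
      obtain \<delta> where "\<delta> > 0" and close: "\<And>t t' y y'. limit_preimage s t y \<Longrightarrow>
          limit_preimage s t' y' \<Longrightarrow> \<bar>t - t'\<bar> < \<delta> \<Longrightarrow> dist y y' < \<epsilon>"
        using limit_preimage_close[OF inv e] by blast
      then show ?thesis using close[OF gx self] by simp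
    qed
    from this[of "dist (g (s x)) x"] show ?thesis by (cases "g (s x) = x") auto
  qed
  moreover have "uniformly_continuous_on (closure (range s)) g"
    unfolding uniformly_continuous_on_def
  proof (intro allI impI)
    fix \<epsilon> :: real assume "\<epsilon> > 0"
    then obtain \<delta> where "\<delta> > 0" and \<delta>: "\<And>t t' y y'. limit_preimage s t y \<Longrightarrow> limit_preimage s t' y' \<Longrightarrow>
        \<bar>t - t'\<bar> < \<delta> \<Longrightarrow> dist y y' < \<epsilon>"
      using limit_preimage_close[OF inv] by blast
    show "\<exists>\<delta>>0. \<forall>t\<in>closure (range s). \<forall>t'\<in>closure (range s). dist t' t < \<delta> \<longrightarrow> dist (g t') (g t) < \<epsilon>"
    proof (intro exI[of _ \<delta>] conjI ballI impI)
      fix t t' assume "t \<in> closure (range s)" "t' \<in> closure (range s)" "dist t' t < \<delta>"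
      then show "dist (g t') (g t) < \<epsilon>" using \<delta>[OF g g] by (simp add: dist_real_def)
    qed fact
  qed
  ultimately show ?thesis using that uniformly_continuous_imp_continuous by blast
qed

subsection \<open>Weak sequential compactness of probability measures\<close>

lemma closed_indicator_continuous_approx:
  fixes C :: "'a::metric_space set"
  assumes "closed C" "C \<noteq> {}"
  defines "h n x \<equiv> max 0 (1 - real n * infdist x C)"
  shows "continuous_on UNIV (h n)" "\<bar>h n x\<bar> \<le> 1" "(\<lambda>n. h n x) \<longlonglongrightarrow> indicator C x"
proof -
  show "continuous_on UNIV (h n)" unfolding h_def by (intro continuous_intros)
  show "\<bar>h n x\<bar> \<le> 1" unfolding h_def using infdist_nonneg[of x C] by auto
  show "(\<lambda>n. h n x) \<longlonglongrightarrow> indicator C x"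
  proof (cases "x \<in> C")
    case True
    then show ?thesis by (simp add: h_def)
  next
    case False
    then have pos: "infdist x C > 0"
      using in_closed_iff_infdist_zero[OF assms(1,2)] infdist_nonneg[of x C] by auto
    obtain N where N: "1 < real N * infdist x C" using reals_Archimedean3[OF pos] by blast
    have "h n x = 0" if "N \<le> n" for n
    proof -
      have "real N * infdist x C \<le> real n * infdist x C" using pos that by (intro mult_right_mono) auto
      then show ?thesis unfolding h_def using N by simp
    qed
    then show ?thesis using False by (auto intro: tendsto_eventually eventually_sequentiallyI)
  qed
qed

text \<open>Hence integrals of continuous functions determine a Borel probability measure: two such
  measures agree on the closed sets, an intersection-stable generator of the Borel sets.\<close>

lemma prob_measure_eqI_continuous:
  fixes M1 M2 :: "'a::metric_space measure"
  assumes p: "prob_space M1" "prob_space M2" and s: "sets M1 = sets borel" "sets M2 = sets borel"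
    and eq: "\<And>h::'a\<Rightarrow>real. continuous_on UNIV h \<Longrightarrow> (\<integral>x. h x \<partial>M1) = (\<integral>x. h x \<partial>M2)"
  shows "M1 = M2"
proof -
  interpret P1: prob_space M1 by fact
  interpret P2: prob_space M2 by fact
  have closed_eq: "emeasure M1 C = emeasure M2 C" if C: "closed C" for C
  proof (cases "C = {}")
    case False
    define h where "h n x = max 0 (1 - real n * infdist x C)" for n x
    note h = closed_indicator_continuous_approx[OF C False, folded h_def]
    have Cb: "C \<in> sets borel" using C by (rule borel_closed)
    have lim: "(\<lambda>n. \<integral>x. h n x \<partial>M) \<longlonglongrightarrow> (\<integral>x. indicator C x \<partial>M)"
      if "prob_space M" "sets M = sets borel" for M
    proof -
      interpret prob_space M by fact
      show ?thesis
        by (rule integral_dominated_convergence[where w="\<lambda>_. 1"])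
           (use h that Cb in \<open>auto simp: measurable_cong_sets[OF that(2) refl]
             intro: borel_measurable_continuous_onI\<close>)
    qed
    have "(\<lambda>n. \<integral>x. h n x \<partial>M1) \<longlonglongrightarrow> (\<integral>x. indicator C x \<partial>M2)"
      using lim[OF p(2) s(2)] eq[OF h(1)] by simp
    then have "(\<integral>x. (indicator C x :: real) \<partial>M1) = (\<integral>x. indicator C x \<partial>M2)"
      using LIMSEQ_unique[OF lim[OF p(1) s(1)]] by blast
    then show ?thesis using Cb s by (simp add: P1.emeasure_eq_measure P2.emeasure_eq_measure)
  qed simp
  show ?thesis
  proof (rule measure_eqI_generator_eq[where E="Collect closed" and \<Omega>=UNIV and A="\<lambda>_. UNIV"])
    show "sets M1 = sigma_sets UNIV (Collect closed)" "sets M2 = sigma_sets UNIV (Collect closed)"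
      using s by (simp_all add: borel_eq_closed)
    show "emeasure M1 UNIV \<noteq> \<infinity>" by simp
  qed (auto simp: Int_stable_def closed_eq)
qed

definition weakly_convergent :: "(nat \<Rightarrow> 'a::metric_space measure) \<Rightarrow> 'a measure \<Rightarrow> bool" where
  "weakly_convergent Ms M \<longleftrightarrow>
     (\<forall>h::'a\<Rightarrow>real. continuous_on UNIV h \<longrightarrow> (\<lambda>k. \<integral>x. h x \<partial>Ms k) \<longlonglongrightarrow> (\<integral>x. h x \<partial>M))"

lemma tight_distr_bounded:
  assumes p: "\<And>k. prob_space (Ms k)" and sm: "\<And>k. s \<in> borel_measurable (Ms k)"
    and B: "\<And>x. \<bar>s x\<bar> \<le> B"
  shows "tight (\<lambda>k. distr (Ms k) borel s)"
  unfolding tight_def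
proof (intro conjI allI impI)
  fix k
  interpret prob_space "Ms k" by (rule p)
  show "real_distribution (distr (Ms k) borel s)"
    using prob_space_distr[OF sm] by (simp add: real_distribution_def real_distribution_axioms_def)
next
  fix \<epsilon> :: real assume e: "\<epsilon> > 0"
  show "\<exists>a b. a < b \<and> (\<forall>k. 1 - \<epsilon> < measure (distr (Ms k) borel s) {a<..b})"
  proof (intro exI conjI allI)
    show "- B - 1 < B + 1" using B[of undefined] by simp
    fix k
    interpret prob_space "Ms k" by (rule p)
    have "s x \<in> {- B - 1<..B + 1}" for x using B[of x] by (simp add: abs_le_iff)
    then have "s -` {- B - 1<..B + 1} \<inter> space (Ms k) = space (Ms k)" by blast
    then have "measure (distr (Ms k) borel s) {- B - 1<..B + 1} = 1"
      by (simp add: measure_distr[OF sm] prob_space)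
    then show "1 - \<epsilon> < measure (distr (Ms k) borel s) {- B - 1<..B + 1}" using e by simp
  qed
qed

text \<open>A weak limit of real distributions concentrated on a closed set is concentrated on it:
  test the convergence against the bounded continuous function \<open>min 1 (infdist t C)\<close>.\<close>

lemma weak_limit_concentrated:
  fixes \<mu> :: "nat \<Rightarrow> real measure"
  assumes \<mu>: "\<And>n. real_distribution (\<mu> n)" and M: "real_distribution M" and conv: "weak_conv_m \<mu> M"
    and C: "closed C" "C \<noteq> {}" and conc: "\<And>n. AE t in \<mu> n. t \<in> C"
  shows "AE t in M. t \<in> C"
proof -
  interpret M: real_distribution M by fact
  define d where "d t = min 1 (infdist t C)" for t
  have d_cont: "isCont d t" for t unfolding d_def by (intro continuous_intros)
  have d_bdd: "norm (d t) \<le> 1" for t unfolding d_def using infdist_nonneg[of t C] by simp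
  have d_zero: "d t = 0 \<longleftrightarrow> infdist t C = 0" for t
    unfolding d_def using infdist_nonneg[of t C] by (simp add: min_def)
  have dm: "d \<in> borel_measurable borel"
    by (intro borel_measurable_continuous_onI continuous_at_imp_continuous_on ballI d_cont)
  have "(\<integral>t. d t \<partial>\<mu> n) = (\<integral>t. 0 \<partial>\<mu> n)" for n
  proof (rule integral_cong_AE)
    show "d \<in> borel_measurable (\<mu> n)"
      using dm real_distribution.events_eq_borel[OF \<mu>[of n]] by (simp cong: measurable_cong_sets)
    show "AE t in \<mu> n. d t = 0" using conc[of n] by eventually_elim (simp add: d_zero)
  qed simp
  then have "(\<lambda>n. 0) \<longlonglongrightarrow> (\<integral>t. d t \<partial>M)"
    using weak_conv_imp_integral_bdd_continuous_conv[OF \<mu> M conv d_cont d_bdd] by simp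
  then have "(\<integral>t. d t \<partial>M) = 0" by (simp add: LIMSEQ_const_iff)
  moreover have "integrable M d"
    using d_bdd dm by (intro M.integrable_const_bound[where B=1]) (auto cong: measurable_cong_sets)
  moreover have "AE t in M. 0 \<le> d t" unfolding d_def by (simp add: infdist_nonneg)
  ultimately have "AE t in M. infdist t C = 0"
    using integral_nonneg_eq_0_iff_AE[of M d] d_zero by simp
  then show ?thesis
    by eventually_elim (use in_closed_iff_infdist_zero[OF C] in blast)
qed


text \<open>Pulling back weak convergence along an encoding \<open>s\<close> with a continuous left inverse \<open>g\<close>
  on a closed set \<open>C\<close> containing its range: a test function \<open>h\<close> on the space becomes the
  bounded continuous real function obtained by extending \<open>h \<circ> g\<close> from \<open>C\<close> (Tietze).\<close>

lemma weakly_convergent_pullback: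
  fixes Ms :: "nat \<Rightarrow> 'a::metric_space measure" and s :: "'a \<Rightarrow> real"
  assumes cpt: "compact (UNIV::'a set)"
    and p: "\<And>k. prob_space (Ms k)" and sk: "\<And>k. sets (Ms k) = sets borel"
    and sb: "s \<in> borel_measurable borel" and C: "closed C" and sC: "\<And>x. s x \<in> C"
    and gc: "continuous_on C g" and gs: "\<And>x. g (s x) = x"
    and N0: "real_distribution N0" and conc: "AE t in N0. t \<in> C"
    and conv: "weak_conv_m (\<lambda>k. distr (Ms k) borel s) N0"
  shows "weakly_convergent Ms (distr N0 borel (\<lambda>t. if t \<in> C then g t else undefined))"
    (is "weakly_convergent Ms (distr N0 borel ?pt)")
  unfolding weakly_convergent_def
proof (intro allI impI)
  fix h :: "'a \<Rightarrow> real" assume hc: "continuous_on UNIV h"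
  interpret N0: real_distribution N0 by fact
  have sm: "s \<in> borel_measurable (Ms k)" for k using sb sk by (simp cong: measurable_cong_sets)
  have N: "real_distribution (distr (Ms k) borel s)" for k
  proof -
    interpret prob_space "Ms k" by (rule p)
    show ?thesis using prob_space_distr[OF sm]
      by (simp add: real_distribution_def real_distribution_axioms_def)
  qed
  have ptm: "?pt \<in> measurable N0 borel"
    using borel_measurable_continuous_on_if[of C g "\<lambda>_. undefined"] C gc
    by (simp add: borel_closed cong: measurable_cong_sets)
  obtain Bh where Bh: "\<And>x. \<bar>h x\<bar> \<le> Bh" using bounded_continuous_compact[OF cpt hc] by blast
  have hgc: "continuous_on C (\<lambda>t. h (g t))" using continuous_on_compose2[OF hc gc] by auto
  have cl: "closedin (top_of_set UNIV) C" using C by simp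
  have Bh0: "0 \<le> Bh" using Bh[of undefined] by linarith
  obtain f where fc: "continuous_on UNIV f" and fC: "\<And>t. t \<in> C \<Longrightarrow> f t = h (g t)"
    and fB: "\<And>t. t \<in> UNIV \<Longrightarrow> norm (f t) \<le> Bh"
    by (rule Tietze[OF hgc cl Bh0]) (use Bh in auto)
  have fm: "f \<in> borel_measurable borel" by (rule borel_measurable_continuous_onI[OF fc])
  have "(\<integral>x. h x \<partial>Ms k) = (\<integral>x. f (s x) \<partial>Ms k)" for k using fC[OF sC] gs by simp
  also have "\<dots>k = (\<integral>t. f t \<partial>distr (Ms k) borel s)" for k by (rule integral_distr[symmetric, OF sm fm])
  finally have lhs: "(\<integral>x. h x \<partial>Ms k) = (\<integral>t. f t \<partial>distr (Ms k) borel s)" for k .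
  have "(\<integral>x. h x \<partial>distr N0 borel ?pt) = (\<integral>t. h (?pt t) \<partial>N0)"
    by (rule integral_distr[OF ptm borel_measurable_continuous_onI[OF hc]])
  also have "\<dots> = (\<integral>t. f t \<partial>N0)"
  proof (rule integral_cong_AE)
    show "(\<lambda>t. h (?pt t)) \<in> borel_measurable N0"
      by (rule measurable_compose[OF ptm borel_measurable_continuous_onI[OF hc]])
    show "f \<in> borel_measurable N0" using fm by (simp cong: measurable_cong_sets)
    show "AE t in N0. h (?pt t) = f t" using conc by eventually_elim (simp add: fC)
  qed
  finally have rhs: "(\<integral>x. h x \<partial>distr N0 borel ?pt) = (\<integral>t. f t \<partial>N0)" .
  have "(\<lambda>k. \<integral>t. f t \<partial>distr (Ms k) borel s) \<longlonglongrightarrow> (\<integral>t. f t \<partial>N0)"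
    using weak_conv_imp_integral_bdd_continuous_conv[OF N N0 conv, of f Bh] fc fB
    by (simp add: continuous_on_eq_continuous_at)
  then show "(\<lambda>k. \<integral>x. h x \<partial>Ms k) \<longlonglongrightarrow> (\<integral>x. h x \<partial>distr N0 borel ?pt)"
    unfolding lhs rhs .
qed

text \<open>Every sequence of Borel probability measures on a compact metric space has a weakly
  convergent subsequence: encode the space into the reals, apply Helly's selection theorem to
  the tight push-forwards, and pull the limit back.\<close>

lemma weakly_convergent_subseq:
  fixes Ms :: "nat \<Rightarrow> 'a::metric_space measure"
  assumes cpt: "compact (UNIV::'a set)"
    and p: "\<And>k. prob_space (Ms k)" and sk: "\<And>k. sets (Ms k) = sets borel"
  obtains r M where "strict_mono r" "prob_space M" "sets M = sets borel" "weakly_convergent (Ms \<circ> r) M"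
proof -
  obtain s :: "'a \<Rightarrow> real" and B where sb: "s \<in> borel_measurable borel" and B: "\<And>x. \<bar>s x\<bar> \<le> B"
    and inv: "uniformly_invertible s"
    using compact_encoding[OF cpt] by blast
  define C where "C = closure (range s)"
  obtain g where gc: "continuous_on C g" and gs: "\<And>x. g (s x) = x"
    using uniformly_invertible_left_inverse[OF cpt inv] unfolding C_def by blast
  have sC: "s x \<in> C" for x unfolding C_def by (rule closure_subset[THEN subsetD, OF rangeI])
  then have C: "closed C" "C \<noteq> {}" unfolding C_def by auto
  define N where "N k = distr (Ms k) borel s" for k
  have sm: "s \<in> borel_measurable (Ms k)" for k using sb sk by (simp cong: measurable_cong_sets)
  have tight: "tight N" unfolding N_def by (rule tight_distr_bounded[OF p sm B])
  then have N: "real_distribution (N k)" for k by (simp add: tight_def)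
  obtain r N0 where r: "strict_mono r" and N0: "real_distribution N0"
    and conv: "weak_conv_m (N \<circ> r) N0"
    using tight_imp_convergent_subsubsequence[OF tight, of id] by (auto simp: strict_mono_def)
  have conc: "AE t in N0. t \<in> C"
  proof (rule weak_limit_concentrated[OF _ N0 conv C])
    show "real_distribution ((N \<circ> r) n)" for n using N by simp
    show "AE t in (N \<circ> r) n. t \<in> C" for n
      unfolding N_def comp_def using sC C(1) by (subst AE_distr_iff[OF sm]) (auto simp: borel_closed)
  qed
  define M where "M = distr N0 borel (\<lambda>t. if t \<in> C then g t else undefined)"
  have "weakly_convergent (Ms \<circ> r) M"
    unfolding M_def using conv
    by (intro weakly_convergent_pullback[OF cpt _ _ sb C(1) sC gc gs N0 conc])
       (simp_all add: p sk N_def comp_def)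
  moreover have "prob_space M"
  proof -
    interpret real_distribution N0 by fact
    show ?thesis unfolding M_def using borel_measurable_continuous_on_if[of C g "\<lambda>_. undefined"] C gc
      by (intro prob_space_distr) (simp add: borel_closed cong: measurable_cong_sets)
  qed
  moreover have "sets M = sets borel" unfolding M_def by simp
  ultimately show ?thesis using that[OF r] by blast
qed

lemma weak_limit_invariant:
  fixes T :: "'a::metric_space \<Rightarrow> 'a"
  assumes cT: "continuous_on UNIV T" and Ms: "\<And>k. Ms k \<in> invariant_measures T"
    and p: "prob_space M" and sM: "sets M = sets borel" and wc: "weakly_convergent Ms M"
  shows "M \<in> invariant_measures T"
proof -
  interpret prob_space M by fact
  have Tm: "T \<in> measurable M borel"
    using borel_measurable_continuous_onI[OF cT] sM by (simp cong: measurable_cong_sets)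
  have "distr M borel T = M"
  proof (rule prob_measure_eqI_continuous)
    show "prob_space (distr M borel T)" by (rule prob_space_distr[OF Tm])
    fix h :: "'a \<Rightarrow> real" assume hc: "continuous_on UNIV h"
    have hT: "continuous_on UNIV (\<lambda>x. h (T x))" using continuous_on_compose2[OF hc cT] by auto
    have "(\<integral>x. h (T x) \<partial>Ms k) = (\<integral>x. h x \<partial>Ms k)" for k
      using integral_funpow_invariant[OF Ms cT hc, where i=1] by simp
    then have "(\<lambda>k. \<integral>x. h x \<partial>Ms k) \<longlonglongrightarrow> (\<integral>x. h (T x) \<partial>M)"
      using wc[unfolded weakly_convergent_def, rule_format, OF hT] by simp
    then have "(\<integral>x. h (T x) \<partial>M) = (\<integral>x. h x \<partial>M)"
      using wc[unfolded weakly_convergent_def, rule_format, OF hc] LIMSEQ_unique by blast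
    then show "(\<integral>x. h x \<partial>distr M borel T) = (\<integral>x. h x \<partial>M)"
      by (simp add: integral_distr[OF Tm borel_measurable_continuous_onI[OF hc]])
  qed (use p sM in simp_all)
  then show ?thesis using invariant_measures_iff_distr[OF cT sM p] by simp
qed

subsection \<open>Continuity of \<open>F\<^sub>*\<close> and attainment of its extrema\<close>

text \<open>Being a uniform limit of integrals of continuous functions, \<open>F\<^sub>*\<close> is continuous along
  weakly convergent sequences of invariant measures.\<close>

lemma Fstar_weakly_continuous:
  fixes T :: "'a::metric_space \<Rightarrow> 'a"
  assumes cpt: "compact (UNIV::'a set)" and cT: "continuous_on UNIV T" and A: "AAP T F"
    and Ms: "\<And>k. Ms k \<in> invariant_measures T" and M: "M \<in> invariant_measures T"
    and wc: "weakly_convergent Ms M"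
  shows "(\<lambda>k. Fstar F (Ms k)) \<longlonglongrightarrow> Fstar F M"
proof (rule metric_LIMSEQ_I)
  fix e :: real assume e: "e > 0"
  obtain g where cg: "continuous_on UNIV g"
    and g: "\<And>N. N \<in> invariant_measures T \<Longrightarrow> \<bar>Fstar F N - (\<integral>x. g x \<partial>N)\<bar> \<le> e/3"
    using Fstar_uniform_approx[OF cpt cT A, of "e/3"] e by auto
  obtain k0 where k0: "\<And>k. k \<ge> k0 \<Longrightarrow> dist (\<integral>x. g x \<partial>Ms k) (\<integral>x. g x \<partial>M) < e/3"
    using wc[unfolded weakly_convergent_def, rule_format, OF cg] e
    unfolding lim_sequentially by (meson divide_pos_pos zero_less_numeral)
  have "dist (Fstar F (Ms k)) (Fstar F M) < e" if "k \<ge> k0" for k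
    using k0[OF that] g[OF Ms[of k]] g[OF M] by (simp only: dist_real_def abs_le_iff abs_less_iff) linarith
  then show "\<exists>k0. \<forall>k\<ge>k0. dist (Fstar F (Ms k)) (Fstar F M) < e" by blast
qed

lemma Fstar_range_compact:
  fixes T :: "'a::metric_space \<Rightarrow> 'a"
  assumes cpt: "compact (UNIV::'a set)" and cT: "continuous_on UNIV T" and A: "AAP T F"
  shows "compact (Fstar F ` invariant_measures T)"
  unfolding seq_compact_eq_compact[symmetric]
proof (rule seq_compactI)
  fix v :: "nat \<Rightarrow> real" assume "\<forall>n. v n \<in> Fstar F ` invariant_measures T"
  then have "\<forall>n. \<exists>N. N \<in> invariant_measures T \<and> v n = Fstar F N" by blast
  then obtain Ms :: "nat \<Rightarrow> 'a measure" where Ms: "\<And>n. Ms n \<in> invariant_measures T" and v: "\<And>n. v n = Fstar F (Ms n)"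
    using choice[of "\<lambda>n N. N \<in> invariant_measures T \<and> v n = Fstar F N"] by blast
  obtain r M where r: "strict_mono r" and p: "prob_space M" and sM: "sets M = sets borel"
    and wc: "weakly_convergent (Ms \<circ> r) M"
    using weakly_convergent_subseq[OF cpt, of Ms] invariant_measuresD[OF Ms] by metis
  have M: "M \<in> invariant_measures T" by (rule weak_limit_invariant[OF cT _ p sM wc]) (simp add: Ms)
  have "(v \<circ> r) \<longlonglongrightarrow> Fstar F M"
    using Fstar_weakly_continuous[OF cpt cT A _ M wc] Ms by (simp add: comp_def v)
  then show "\<exists>l\<in>Fstar F ` invariant_measures T. \<exists>r. strict_mono r \<and> (v \<circ> r) \<longlonglongrightarrow> l"
    using M r by blast
qed

lemma Fstar_bdd_above:
  fixes T :: "'a::metric_space \<Rightarrow> 'a"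
  assumes "compact (UNIV::'a set)" "continuous_on UNIV T" "AAP T F" "S \<subseteq> invariant_measures T"
  shows "bdd_above (Fstar F ` S)"
  using bounded_imp_bdd_above[OF compact_imp_bounded[OF Fstar_range_compact[OF assms(1-3)]]]
    bdd_above_mono assms(4) by (metis image_mono)

lemma Fstar_extrema_attained:
  fixes T :: "'a::metric_space \<Rightarrow> 'a"
  assumes cpt: "compact (UNIV::'a set)" and cT: "continuous_on UNIV T" and A: "AAP T F"
    and ne: "invariant_measures T \<noteq> {}"
  shows "\<exists>N\<in>invariant_measures T. Fstar F N = beta T F"
    and "\<exists>N\<in>invariant_measures T. Fstar F N = eta T F"
proof -
  have K: "compact (Fstar F ` invariant_measures T)" by (rule Fstar_range_compact[OF cpt cT A])
  have "beta T F \<in> Fstar F ` invariant_measures T" unfolding beta_def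
    using K ne by (intro closed_contains_Sup compact_imp_closed bounded_imp_bdd_above compact_imp_bounded) auto
  then show "\<exists>N\<in>invariant_measures T. Fstar F N = beta T F" by auto
  have "eta T F \<in> Fstar F ` invariant_measures T" unfolding eta_def
    using K ne by (intro closed_contains_Inf compact_imp_closed bounded_imp_bdd_below compact_imp_bounded) auto
  then show "\<exists>N\<in>invariant_measures T. Fstar F N = eta T F" by auto
qed

subsection \<open>Moving a level towards the optimum does not decrease \<open>\<Lambda>\<close>\<close>

lemma intermediate_level:
  fixes T :: "'a::metric_space \<Rightarrow> 'a"
  assumes cpt: "compact (UNIV::'a set)" and cT: "continuous_on UNIV T"
    and AF: "AAP T F" and AP: "AAP T \<Phi>"
    and mu: "\<mu> \<in> invariant_measures T" and opt: "Fstar F \<mu> = beta T F"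
    and N: "N \<in> invariant_measures T"
    and a: "min (Fstar \<Phi> N) (Fstar \<Phi> \<mu>) \<le> a" "a \<le> max (Fstar \<Phi> N) (Fstar \<Phi> \<mu>)"
  obtains N' where "N' \<in> level_measures T \<Phi> a" "Fstar F N \<le> Fstar F N'"
proof (cases "Fstar \<Phi> N = Fstar \<Phi> \<mu>")
  case True
  then show ?thesis using that[of N] a N by (simp add: level_measures_def)
next
  case False
  let ?b = "Fstar \<Phi> N" and ?c = "Fstar \<Phi> \<mu>"
  define t where "t = (a - ?c) / (?b - ?c)"
  have t: "0 \<le> t" "t \<le> 1"
    using a False unfolding t_def by (auto simp: field_simps min_def max_def split: if_splits)
  have le: "Fstar F N \<le> Fstar F \<mu>"
    unfolding opt beta_def by (rule cSUP_upper[OF N Fstar_bdd_above[OF cpt cT AF order_refl]])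
  let ?N = "mixture t N \<mu>"
  have inv: "?N \<in> invariant_measures T" by (rule mixture_invariant[OF cT t N mu])
  have "Fstar \<Phi> ?N = t * ?b + (1 - t) * ?c" by (rule Fstar_mixture[OF cpt cT AP t N mu])
  also have "\<dots> = t * (?b - ?c) + ?c" by (simp add: algebra_simps)
  also have "\<dots> = a" using False unfolding t_def by simp
  finally have "?N \<in> level_measures T \<Phi> a" using inv by (simp add: level_measures_def)
  moreover have "Fstar F N \<le> Fstar F ?N"
  proof -
    have "t * Fstar F N + (1 - t) * Fstar F N \<le> t * Fstar F N + (1 - t) * Fstar F \<mu>"
      using le t by (intro add_left_mono mult_left_mono) auto
    then show ?thesis using Fstar_mixture[OF cpt cT AF t N mu] by (simp add: algebra_simps)
  qed
  ultimately show ?thesis by (rule that)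
qed

text \<open>Moving the level \<open>a\<^sub>1\<close> towards \<open>\<Phi>\<^sub>*(\<mu>)\<close> does not decrease \<open>\<Lambda>\<close>: each measure at level
  \<open>a\<^sub>1\<close> is dominated by one at the new level \<open>a\<^sub>2\<close>.\<close>

lemma Lambda_le_towards_optimum:
  fixes T :: "'a::metric_space \<Rightarrow> 'a"
  assumes cpt: "compact (UNIV::'a set)" and cT: "continuous_on UNIV T"
    and AF: "AAP T F" and AP: "AAP T \<Phi>"
    and mu: "\<mu> \<in> invariant_measures T" and opt: "Fstar F \<mu> = beta T F"
    and ne: "level_measures T \<Phi> a1 \<noteq> {}"
    and a2: "min a1 (Fstar \<Phi> \<mu>) \<le> a2" "a2 \<le> max a1 (Fstar \<Phi> \<mu>)"
  shows "Lambda T F \<Phi> a1 \<le> Lambda T F \<Phi> a2"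
  unfolding Lambda_def
proof (rule cSUP_least[OF ne])
  fix N assume "N \<in> level_measures T \<Phi> a1"
  then have N: "N \<in> invariant_measures T" "Fstar \<Phi> N = a1" by (auto simp: level_measures_def)
  obtain N' where N': "N' \<in> level_measures T \<Phi> a2" "Fstar F N \<le> Fstar F N'"
    using intermediate_level[OF cpt cT AF AP mu opt N(1)] a2 N(2) by blast
  have "Fstar F N' \<le> (SUP M\<in>level_measures T \<Phi> a2. Fstar F M)"
    by (rule cSUP_upper[OF N'(1) Fstar_bdd_above[OF cpt cT AF]]) (auto simp: level_measures_def)
  then show "Fstar F N \<le> (SUP M\<in>level_measures T \<Phi> a2. Fstar F M)" using N'(2) by linarith
qed


lemma level_measures_nonempty:
  fixes T :: "'a::metric_space \<Rightarrow> 'a"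
  assumes "compact (UNIV::'a set)" "continuous_on UNIV T" "AAP T F" "AAP T \<Phi>"
    "\<mu> \<in> invariant_measures T" "Fstar F \<mu> = beta T F" "N \<in> invariant_measures T"
    "min (Fstar \<Phi> N) (Fstar \<Phi> \<mu>) \<le> a" "a \<le> max (Fstar \<Phi> N) (Fstar \<Phi> \<mu>)"
  shows "level_measures T \<Phi> a \<noteq> {}"
  using intermediate_level[OF assms] by blast

theorem theoremB:
  fixes T :: "'a::metric_space \<Rightarrow> 'a"
    and F \<Phi> :: "nat \<Rightarrow> 'a \<Rightarrow> real"
    and \<mu> :: "'a measure"
  assumes "compact (UNIV :: 'a set)"
    and "continuous_on UNIV T"
    and "AAP T F" and "AAP T \<Phi>"
    and "\<mu> \<in> ergodic_measures T"
    and "Fstar F \<mu> = beta T F"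
  shows "mono_on {eta T \<Phi> .. Fstar \<Phi> \<mu>} (Lambda T F \<Phi>)
    \<and> antimono_on {Fstar \<Phi> \<mu> .. beta T \<Phi>} (Lambda T F \<Phi>)"
proof -
  note basics = assms(1-4)
  have mu: "\<mu> \<in> invariant_measures T" using assms(5) by (simp add: ergodic_measures_def)
  note towards = Lambda_le_towards_optimum[OF basics mu assms(6)]
  note nonempty = level_measures_nonempty[OF basics mu assms(6)]
  obtain Nmax Nmin where Nmax: "Nmax \<in> invariant_measures T" "Fstar \<Phi> Nmax = beta T \<Phi>"
    and Nmin: "Nmin \<in> invariant_measures T" "Fstar \<Phi> Nmin = eta T \<Phi>"
    using Fstar_extrema_attained[OF assms(1,2,4)] mu by blast
  have "mono_on {eta T \<Phi> .. Fstar \<Phi> \<mu>} (Lambda T F \<Phi>)"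
  proof (rule mono_onI)
    fix r s assume "r \<in> {eta T \<Phi> .. Fstar \<Phi> \<mu>}" "s \<in> {eta T \<Phi> .. Fstar \<Phi> \<mu>}" "r \<le> s"
    then show "Lambda T F \<Phi> r \<le> Lambda T F \<Phi> s"
      using towards[OF nonempty[OF Nmin(1), of r]] Nmin(2) by simp
  qed
  moreover have "antimono_on {Fstar \<Phi> \<mu> .. beta T \<Phi>} (Lambda T F \<Phi>)"
  proof (rule monotone_onI)
    fix r s assume "r \<in> {Fstar \<Phi> \<mu> .. beta T \<Phi>}" "s \<in> {Fstar \<Phi> \<mu> .. beta T \<Phi>}" "r \<le> s"
    then show "Lambda T F \<Phi> s \<le> Lambda T F \<Phi> r"
      using towards[OF nonempty[OF Nmax(1), of s]] Nmax(2) by simp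
  qed
  ultimately show ?thesis by blast
qed

end
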